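(* Let $t$ be a prime number and $\zeta$ a primitive $t$-th root of unity, let $q\in\mathbb{C}$ with $|q|>1$, and let $\Sigma=\mathbb{Z}\oplus\mathbb{Z}/t\mathbb{Z}$ act on the ring $\mathcal M$ of meromorphic functions on $\mathbb{C}^*$, the first summand generated by $\sigma_q(f)(z)=f(qz)$ and the second by $\sigma_\zeta(f)(z)=f(\zeta z)$. Let $k$ be the field of $\sigma_q$-invariant meromorphic functions on $\mathbb{C}^*$, let $C$ be the $\Sigma_1$-closure of $k$ (where $\Sigma_1=\mathbb{Z}/t\mathbb{Z}$), and let $K$ be the total ring of fractions of the polynomial ring $C[z]$ with $\sigma_q(z)=qz$ and $\sigma_\zeta(z)=\zeta z$ (so $K$ is a Noetherian $\Sigma$-pseudofield whose $\sigma_q$-constants form the $\Sigma_1$-closed pseudofield $C$, and $k(z)$ embeds naturally in $K$). Let $R$ be a Picard-Vessiot ring over $K$ for the equation $\sigma_q(y)=-qz\cdot y$, and let $\theta_q(z)=-\sum_{n\in\mathbb{Z}}(-1)^nq^{-n(n-1)/2}z^n$ be Jacobi's theta-function (a solution of $\theta_q(qz)=-qz\cdot\theta_q(z)$). Then every relation of the form $$ \lambda_0 + \sum_{d=1}^{t-1}\lambda_{0d}\cdot\theta_q(z)^d+\lambda_{1d}\cdot\theta_q(\zeta z)^d+\ldots+\lambda_{t-1\, d}\cdot\theta_q(\zeta^{t-1}z)^d=0, $$ with $\lambda_0,\lambda_{ij}\in k(z)$, implies that $\lambda_0=\lambda_{ij}=0$.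
   Context: A $\Sigma_1$-closed (difference closed) pseudofield is an absolutely flat $\Sigma_1$-simple ring $A$ such that for every $\Sigma_1$-ideal $I$ of the difference polynomial ring $A\{y_1,\ldots,y_n\}_{\Sigma_1}$ one has $\sqrt{I}=\mathbb{I}(\mathbb{V}(I))$. A Picard-Vessiot ring for $\sigma Y=AY$ over $K$ is a $\Sigma$-simple $\Sigma$-ring containing $K$ that contains a fundamental matrix $F$ and is $\Sigma$-generated over $K$ by the entries of $F$ and $1/\det F$. *)

theory Defs
  imports "HOL-Complex_Analysis.Complex_Analysis"
begin

text \<open>Jacobi theta function: theta_q(z) = - sum over n in Z of (-1)^n q^(-n(n-1)/2) z^n,
  for z in C^* (the series converges absolutely when |q| > 1).\<close>
definition jacobi_theta :: "complex \<Rightarrow> complex \<Rightarrow> complex" where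
  "jacobi_theta q z =
     - (\<Sum>\<^sub>\<infinity>n::int. (-1) powi n * q powi (- ((n * (n - 1)) div 2)) * z powi n)"

text \<open>The field k of sigma_q-invariant meromorphic functions on C^*.
  Meromorphic functions are identified when they agree outside a discrete subset of C^*.\<close>
definition q_invariant_mero :: "complex \<Rightarrow> (complex \<Rightarrow> complex) set" where
  "q_invariant_mero q =
     {f. f meromorphic_on (-{0}) \<and> (\<forall>\<^sub>\<approx>z\<in>(-{0}). f (q * z) = f z)}"

definition in_kz :: "complex \<Rightarrow> (complex \<Rightarrow> complex) \<Rightarrow> bool" where
  "in_kz q f \<longleftrightarrow>
     (\<exists>(a :: nat \<Rightarrow> complex \<Rightarrow> complex) (b :: nat \<Rightarrow> complex \<Rightarrow> complex) (m :: nat).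
        (\<forall>i. a i \<in> q_invariant_mero q) \<and> (\<forall>i. b i \<in> q_invariant_mero q) \<and>
        \<not> (\<forall>\<^sub>\<approx>z\<in>(-{0}). (\<Sum>i\<le>m. b i z * z ^ i) = 0) \<and>
        (\<forall>\<^sub>\<approx>z\<in>(-{0}). f z = (\<Sum>i\<le>m. a i z * z ^ i) / (\<Sum>i\<le>m. b i z * z ^ i)))"

end

theory Submission
  imports Defs
begin

text \<open>Along a q-orbit theta grows like a Gaussian: \<open>\<theta>(q^n w) = (-w)^n q^(n(n+1)/2) \<theta>(w)\<close>, while
  off a countable set of points \<open>z\<close> an element of \<open>k(z)\<close> restricts to a fixed rational function of
  \<open>q^n\<close> on the orbit of \<open>z\<close>. After clearing denominators, a relation evaluated at \<open>q^n z\<close> becomes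
  a vanishing sum over \<open>d\<close> of \<open>F_d(n) (-z)^(dn) q^(d n(n+1)/2)\<close>, where \<open>F_d(n)\<close> is a polynomial
  in \<open>q^n\<close> whose coefficients are the t-periodic character sums \<open>\<Sum>_i c_i \<zeta>^(idn)\<close>. The Gaussian
  factor of the top degree outgrows all other terms, so the \<open>F_d\<close> vanish one after the other;
  for \<open>d \<noteq> 0\<close>, \<open>\<zeta>^d\<close> is again a primitive root of unity since \<open>t\<close> is prime, and orthogonality
  of characters kills each coefficient separately. Thus every coefficient of the relation vanishes
  off a countable set, hence, being meromorphic, identically.\<close>

section \<open>Laurent coefficients and the functional equation of theta\<close>

definition theta_coeff :: "complex \<Rightarrow> int \<Rightarrow> complex" where
  "theta_coeff q n = (-1) powi n * q powi (- ((n * (n - 1)) div 2))"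

lemma jacobi_theta_altdef: "jacobi_theta q z = - (\<Sum>\<^sub>\<infinity>n. theta_coeff q n * z powi n)"
  by (simp add: jacobi_theta_def theta_coeff_def)

lemma theta_coeff_succ:
  assumes "q \<noteq> 0"
  shows "theta_coeff q (n + 1) = - theta_coeff q n * q powi (- n)"
proof -
  have "- (((n + 1) * (n + 1 - 1)) div 2) = - ((n * (n - 1)) div 2) + (- n)"
  proof -
    have "(n + 1) * n = n * (n - 1) + 2 * n" by (simp add: algebra_simps)
    then show ?thesis by simp
  qed
  then have "q powi (- (((n + 1) * (n + 1 - 1)) div 2)) = q powi (- ((n * (n - 1)) div 2)) * q powi (- n)"
    using assms power_int_add[of q "- ((n * (n - 1)) div 2)" "- n"] by simp
  moreover have "(-1::complex) powi (n + 1) = - ((-1) powi n)"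
    by (simp add: power_int_add)
  ultimately show ?thesis by (simp add: theta_coeff_def)
qed

lemma theta_coeff_reflect: "theta_coeff q (1 - n) = - theta_coeff q n"
proof -
  have "(1 - n) * (1 - n - 1) = n * (n - 1)" by (simp add: algebra_simps)
  moreover have "(-1::complex) powi (1 - n) = - ((-1) powi n)"
    by (simp add: power_int_diff power_int_minus_left)
  ultimately show ?thesis by (simp add: theta_coeff_def)
qed

lemma jacobi_theta_mult_q:
  assumes q: "q \<noteq> 0" and z: "z \<noteq> 0"
  shows "jacobi_theta q (q * z) = - (q * z) * jacobi_theta q z"
proof -
  define f where "f n = theta_coeff q n * z powi n" for n
  have shift: "theta_coeff q n * (q * z) powi n = - (q * z) * f (n - 1)" for n
  proof -
    have "theta_coeff q n = - theta_coeff q (n - 1) * q powi (- (n - 1))"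
      using theta_coeff_succ[OF q, of "n - 1"] by simp
    moreover have "q powi (- (n - 1)) * q powi n = q"
      using q by (simp add: power_int_add[symmetric])
    moreover have "z powi n = z * z powi (n - 1)"
      using z by (metis add.commute diff_add_cancel power_int_add_1')
    ultimately show ?thesis
      unfolding f_def by (simp add: power_int_mult_distrib algebra_simps)
  qed
  have "(\<Sum>\<^sub>\<infinity>n. f (n - 1)) = (\<Sum>\<^sub>\<infinity>n. f n)"
    by (rule infsum_reindex_bij_betw)
       (auto simp: bij_betw_def inj_on_def image_iff intro!: exI[of _ "_ + 1"])
  then show ?thesis
    unfolding jacobi_theta_altdef using shift
    by (simp add: infsum_cmult_right' infsum_uminus f_def)
qed

definition triangular :: "nat \<Rightarrow> nat" where
  "triangular n = n * (n + 1) div 2"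

lemma triangular_Suc: "triangular (Suc n) = triangular n + Suc n"
proof -
  have "Suc n * (Suc n + 1) = n * (n + 1) + 2 * Suc n" by simp
  then show ?thesis unfolding triangular_def by simp
qed

lemma jacobi_theta_mult_q_power:
  assumes q: "q \<noteq> 0" and w: "w \<noteq> 0"
  shows "jacobi_theta q (q ^ n * w) = (- w) ^ n * q ^ triangular n * jacobi_theta q w"
proof (induction n)
  case (Suc n)
  have "jacobi_theta q (q ^ Suc n * w) = - (q * (q ^ n * w)) * jacobi_theta q (q ^ n * w)"
    using jacobi_theta_mult_q[of q "q ^ n * w"] q w by (simp add: mult.assoc)
  also have "\<dots> = (- w) ^ Suc n * q ^ triangular (Suc n) * jacobi_theta q w"
    unfolding Suc triangular_Suc by (simp add: power_add algebra_simps)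
  finally show ?case .
qed (simp add: triangular_def)

lemma jacobi_theta_power_mult_q_power:
  assumes q: "q \<noteq> 0" and z: "z \<noteq> 0" and c: "c \<noteq> 0"
  shows "jacobi_theta q (c * (q ^ n * z)) ^ d =
         (c ^ d) ^ n * ((- z) ^ d) ^ n * q ^ (d * triangular n) * jacobi_theta q (c * z) ^ d"
proof -
  have "jacobi_theta q (c * (q ^ n * z)) = jacobi_theta q (q ^ n * (c * z))"
    by (simp add: ac_simps)
  also have "\<dots> = (- (c * z)) ^ n * q ^ triangular n * jacobi_theta q (c * z)"
    using q z c by (intro jacobi_theta_mult_q_power) auto
  also have "(- (c * z)) ^ n = c ^ n * (- z) ^ n"
    by (simp add: power_mult_distrib[symmetric])
  finally have theta: "jacobi_theta q (c * (q ^ n * z)) = c ^ n * (- z) ^ n * q ^ triangular n * jacobi_theta q (c * z)" .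
  have "(c ^ n) ^ d = (c ^ d) ^ n" "((- z) ^ n) ^ d = ((- z) ^ d) ^ n" "(q ^ triangular n) ^ d = q ^ (d * triangular n)"
    by (simp_all add: power_mult[symmetric] mult.commute)
  then show ?thesis
    unfolding theta power_mult_distrib by simp
qed

section \<open>Theta is a nonzero holomorphic function on the punctured plane\<close>

lemma summable_superexp_ratio:
  fixes b :: "nat \<Rightarrow> real"
  assumes Q: "Q > 1" and b: "\<And>n. b n \<ge> 0" and ratio: "\<And>n. b (Suc n) \<le> b n / Q ^ n"
    and r: "r \<ge> 0"
  shows "summable (\<lambda>n. b n * r ^ n)"
proof -
  obtain N where N: "2 * r < Q ^ N" using real_arch_pow[OF Q] by blast
  show ?thesis
  proof (rule summable_ratio_test[of "1/2" N])
    fix n assume "N \<le> n"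
    then have "2 * r < Q ^ n" using N Q power_increasing[of N n Q] by linarith
    then have "r / Q ^ n \<le> 1/2" using Q by (simp add: field_simps)
    have "b (Suc n) * r ^ Suc n \<le> (b n / Q ^ n) * r ^ Suc n"
      using ratio r by (intro mult_right_mono) auto
    also have "\<dots> = (b n * r ^ n) * (r / Q ^ n)" by (simp add: field_simps)
    also have "\<dots> \<le> (b n * r ^ n) * (1/2)"
      using \<open>r / Q ^ n \<le> 1/2\<close> b r by (intro mult_left_mono) auto
    finally show "norm (b (Suc n) * r ^ Suc n) \<le> 1/2 * norm (b n * r ^ n)"
      using b r by (simp add: abs_mult)
  qed simp
qed

lemma fps_conv_radius_superexp_ratio:
  fixes c :: "nat \<Rightarrow> complex"
  assumes "Q > 1" and "\<And>n. norm (c (Suc n)) \<le> norm (c n) / Q ^ n"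
  shows "fps_conv_radius (Abs_fps c) = \<infinity>"
  unfolding fps_conv_radius_def fps_nth_Abs_fps
proof (rule conv_radius_inftyI'[of 0])
  fix r :: real assume "r > 0"
  then have "summable (\<lambda>n. norm (c n * of_real r ^ n))"
    using summable_superexp_ratio[of Q "\<lambda>n. norm (c n)" r] assms
    by (simp add: norm_mult norm_power)
  then show "\<exists>z. norm z = r \<and> summable (\<lambda>n. c n * z ^ n)"
    using \<open>r > 0\<close> by (intro exI[of _ "of_real r"]) (auto intro: summable_norm_cancel)
qed

lemma norm_theta_coeff_Suc:
  assumes "q \<noteq> 0"
  shows "norm (theta_coeff q (int (Suc k))) = norm (theta_coeff q (int k)) / norm q ^ k"
  using theta_coeff_succ[OF assms, of "int k"] assms
  by (simp add: norm_mult norm_power_int power_int_minus divide_inverse add.commute norm_inverse norm_power)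

text \<open>The Laurent series of theta splits into a power series in \<open>z\<close> and one in \<open>1/z\<close>, both entire
  since the coefficients decay like \<open>|q|^(-n^2/2)\<close>.\<close>

definition theta_pos :: "complex \<Rightarrow> complex \<Rightarrow> complex" where
  "theta_pos q = eval_fps (Abs_fps (\<lambda>k. theta_coeff q (int k)))"

definition theta_neg :: "complex \<Rightarrow> complex \<Rightarrow> complex" where
  "theta_neg q = eval_fps (Abs_fps (\<lambda>k. theta_coeff q (- int k - 1)))"

lemma fps_conv_radius_theta_pos:
  assumes "norm q > 1"
  shows "fps_conv_radius (Abs_fps (\<lambda>k. theta_coeff q (int k))) = \<infinity>"
proof (rule fps_conv_radius_superexp_ratio[OF assms])
  have "q \<noteq> 0" using assms by auto
  then show "norm (theta_coeff q (int (Suc k))) \<le> norm (theta_coeff q (int k)) / norm q ^ k" for k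
    using norm_theta_coeff_Suc[of q k] by simp
qed

lemma fps_conv_radius_theta_neg:
  assumes q: "norm q > 1"
  shows "fps_conv_radius (Abs_fps (\<lambda>k. theta_coeff q (- int k - 1))) = \<infinity>"
proof (rule fps_conv_radius_superexp_ratio[OF q])
  fix k
  have q0: "q \<noteq> 0" using q by auto
  have reflect: "theta_coeff q (- int j - 1) = - theta_coeff q (int (Suc (Suc j)))" for j
  proof -
    have "- int j - 1 = 1 - int (Suc (Suc j))" by simp
    then show ?thesis by (metis theta_coeff_reflect)
  qed
  have "norm q ^ k \<le> norm q ^ Suc (Suc k)" using q by (intro power_increasing) auto
  then show "norm (theta_coeff q (- int (Suc k) - 1)) \<le> norm (theta_coeff q (- int k - 1)) / norm q ^ k"
    unfolding reflect norm_minus_cancel norm_theta_coeff_Suc[OF q0, of "Suc (Suc k)"]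
    using q by (intro divide_left_mono) (auto intro!: mult_pos_pos zero_less_power)
qed

lemma has_sum_eval_fps_entire:
  fixes f :: "complex fps"
  assumes "fps_conv_radius f = \<infinity>"
  shows "((\<lambda>n. fps_nth f n * z ^ n) has_sum eval_fps f z) UNIV"
  using assms by (intro norm_summable_imp_has_sum norm_summable_fps sums_eval_fps) auto

lemma jacobi_theta_laurent:
  assumes q: "norm q > 1" and z: "z \<noteq> 0"
  shows "jacobi_theta q z = - (theta_pos q z + theta_neg q (1 / z) / z)"
proof -
  define f where "f n = theta_coeff q n * z powi n" for n
  have pos: "(f has_sum theta_pos q z) (range int)"
    using has_sum_eval_fps_entire[OF fps_conv_radius_theta_pos[OF q], of z]
    by (subst has_sum_reindex) (auto simp: o_def f_def theta_pos_def)
  have "f (- int k - 1) = theta_coeff q (- int k - 1) * (1 / z) ^ k / z" for k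
    using z by (simp add: f_def power_int_diff power_int_minus field_simps)
  then have "((\<lambda>k. f (- int k - 1)) has_sum theta_neg q (1 / z) / z) UNIV"
    using has_sum_divide_const[OF has_sum_eval_fps_entire[OF fps_conv_radius_theta_neg[OF q]], of "1 / z" z]
    by (simp add: theta_neg_def)
  then have neg: "(f has_sum theta_neg q (1 / z) / z) (range (\<lambda>k. - int k - 1))"
    by (subst has_sum_reindex) (auto simp: o_def inj_on_def)
  have "range int \<union> range (\<lambda>k. - int k - 1) = (UNIV :: int set)"
  proof -
    have "n \<in> range int \<union> range (\<lambda>k. - int k - 1)" for n :: int
    proof (cases "n \<ge> 0")
      case True then show ?thesis by (auto intro!: image_eqI[of _ _ "nat n"])
    next
      case False then show ?thesis by (auto intro!: image_eqI[of _ _ "nat (- n - 1)"])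
    qed
    then show ?thesis by auto
  qed
  moreover have "range int \<inter> range (\<lambda>k. - int k - 1) = {}" by auto
  ultimately have "(f has_sum (theta_pos q z + theta_neg q (1 / z) / z)) UNIV"
    using has_sum_Un_disjoint[OF pos neg] by simp
  then show ?thesis
    unfolding jacobi_theta_altdef f_def by (simp add: infsumI)
qed

lemma theta_pos_holomorphic: "norm q > 1 \<Longrightarrow> theta_pos q holomorphic_on A"
  unfolding theta_pos_def by (intro holomorphic_on_eval_fps) (simp add: fps_conv_radius_theta_pos)

lemma theta_neg_holomorphic: "norm q > 1 \<Longrightarrow> theta_neg q holomorphic_on A"
  unfolding theta_neg_def by (intro holomorphic_on_eval_fps) (simp add: fps_conv_radius_theta_neg)

lemma jacobi_theta_holomorphic:
  assumes q: "norm q > 1"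
  shows "jacobi_theta q holomorphic_on (- {0})"
proof -
  have "(\<lambda>z. - (theta_pos q z + theta_neg q (1 / z) / z)) holomorphic_on (- {0})"
    by (intro holomorphic_intros theta_pos_holomorphic[OF q]
          holomorphic_on_compose[OF _ theta_neg_holomorphic[OF q], unfolded o_def]) auto
  then show ?thesis
    by (rule holomorphic_cong[THEN iffD1, rotated 2]) (auto simp: jacobi_theta_laurent[OF q])
qed

lemma continuous_on_ae_zero_imp_zero:
  fixes f :: "complex \<Rightarrow> complex"
  assumes f: "continuous_on (- {0}) f" and ae: "\<forall>\<^sub>\<approx>z\<in>- {0}. f z = 0" and x: "x \<noteq> 0"
  shows "f x = 0"
proof -
  have "(f \<longlongrightarrow> f x) (at x)"
    using f x by (simp add: continuous_on_eq_continuous_at isCont_def open_Compl)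
  moreover have "(f \<longlongrightarrow> 0) (at x)"
    using eventually_cosparse_imp_eventually_at[OF ae, of x UNIV] x
    by (intro tendsto_eventually) simp
  ultimately show ?thesis by (rule LIM_unique)
qed

lemma jacobi_theta_not_ae_zero:
  assumes q: "norm q > 1"
  shows "\<not> (\<forall>\<^sub>\<approx>z\<in>- {0}. jacobi_theta q z = 0)"
proof
  assume "\<forall>\<^sub>\<approx>z\<in>- {0}. jacobi_theta q z = 0"
  then have zero: "jacobi_theta q x = 0" if "x \<noteq> 0" for x
    using jacobi_theta_holomorphic[OF q] that
    by (intro continuous_on_ae_zero_imp_zero holomorphic_on_imp_continuous_on)
  text \<open>Then \<open>theta_pos q z = - theta_neg q (1/z) / z \<longrightarrow> 0\<close> at infinity, so Liouville makes the
    entire function \<open>theta_pos q\<close> vanish, contradicting \<open>theta_pos q 0 = 1\<close>.\<close>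
  have pos_eq: "theta_pos q z = - (theta_neg q (1 / z) * (1 / z))" if "z \<noteq> 0" for z
  proof -
    have "theta_pos q z + theta_neg q (1 / z) / z = 0"
      using jacobi_theta_laurent[OF q that] zero[OF that] neg_equal_0_iff_equal by metis
    then show ?thesis by (simp add: eq_neg_iff_add_eq_0)
  qed
  have "((\<lambda>z::complex. 1 / z) \<longlongrightarrow> 0) at_infinity"
    using tendsto_inverse_0 by (simp add: inverse_eq_divide[symmetric])
  moreover have "isCont (theta_neg q) 0"
    using theta_neg_holomorphic[OF q, of UNIV] holomorphic_on_imp_continuous_on
      continuous_on_eq_continuous_at by blast
  ultimately have "((\<lambda>z. - (theta_neg q (1 / z) * (1 / z))) \<longlongrightarrow> - (theta_neg q 0 * 0)) at_infinity"
    by (intro tendsto_intros isCont_tendsto_compose[of 0 "theta_neg q"])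
  moreover have "eventually (\<lambda>z::complex. z \<noteq> 0) at_infinity"
    unfolding eventually_at_infinity by (rule exI[of _ 1]) auto
  then have "eventually (\<lambda>z. - (theta_neg q (1 / z) * (1 / z)) = theta_pos q z) at_infinity"
    by eventually_elim (simp add: pos_eq)
  ultimately have "(theta_pos q \<longlongrightarrow> 0) at_infinity"
    by (simp add: tendsto_cong)
  then have "theta_pos q 0 = 0" by (intro Liouville_weak_0 theta_pos_holomorphic[OF q])
  moreover have "theta_pos q 0 = 1" by (simp add: theta_pos_def eval_fps_at_0 theta_coeff_def)
  ultimately show False by simp
qed

lemma jacobi_theta_ae_nonzero:
  assumes q: "norm q > 1"
  shows "\<forall>\<^sub>\<approx>z\<in>- {0}. jacobi_theta q z \<noteq> 0"
proof -
  have "jacobi_theta q meromorphic_on (- {0})"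
    using jacobi_theta_holomorphic[OF q]
    by (intro analytic_on_imp_meromorphic_on) (subst analytic_on_open, auto)
  moreover have "open (- {0::complex})" "connected (- {0::complex})"
    by (auto intro: connected_punctured_universe)
  ultimately show ?thesis
    using meromorphic_imp_constant_or_avoid[of "jacobi_theta q" "- {0}" 0] jacobi_theta_not_ae_zero[OF q]
    by blast
qed

section \<open>Exponential sums with periodic coefficients\<close>

lemma periodic_add_mult:
  fixes g :: "nat \<Rightarrow> 'a" and t k :: nat
  assumes "\<And>n. g (n + t) = g n"
  shows "g (n + t * k) = g n"
proof (induction k)
  case (Suc k)
  have "n + t * Suc k = (n + t * k) + t" by simp
  then show ?case using assms Suc.IH by metis
qed simp

lemma periodic_norm_le_sum:
  fixes g :: "nat \<Rightarrow> 'a::real_normed_vector"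
  assumes t: "t > 0" and per: "\<And>n. g (n + t) = g n"
  shows "norm (g n) \<le> (\<Sum>k<t. norm (g k))"
proof -
  have "g n = g (n mod t)"
    using periodic_add_mult[of g t, OF per, of "n mod t" "n div t"] by simp
  moreover have "norm (g (n mod t)) \<le> (\<Sum>k<t. norm (g k))"
    using t by (intro member_le_sum) auto
  ultimately show ?thesis by simp
qed

lemma periodic_tendsto_zero_imp_zero:
  fixes g :: "nat \<Rightarrow> 'a::real_normed_vector"
  assumes t: "t > 0" and per: "\<And>n. g (n + t) = g n" and lim: "g \<longlonglongrightarrow> 0"
  shows "g n = 0"
proof -
  have "strict_mono (\<lambda>k. n + t * k)" using t by (auto simp: strict_mono_def)
  from LIMSEQ_subseq_LIMSEQ[OF lim this] have "(\<lambda>k. g n) \<longlonglongrightarrow> 0"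
    by (simp add: o_def periodic_add_mult[of g t, OF per])
  then show ?thesis by (simp add: LIMSEQ_const_iff)
qed

lemma periodic_exp_sum_tendsto_zero_imp_zero:
  fixes q :: complex and g :: "nat \<Rightarrow> nat \<Rightarrow> complex"
  assumes q: "norm q > 1" and t: "t > 0" and per: "\<And>m n. g m (n + t) = g m n"
  shows "(\<lambda>n. \<Sum>m\<le>N. g m n * (q ^ m) ^ n) \<longlonglongrightarrow> 0 \<Longrightarrow> \<forall>m\<le>N. \<forall>n. g m n = 0"
proof (induction N)
  case 0
  then show ?case using periodic_tendsto_zero_imp_zero[of t "g 0", OF t per] by simp
next
  case (Suc N)
  have q0: "q \<noteq> 0" using q by auto
  define rest where "rest n = (\<Sum>m\<le>N. g m n * (q ^ m / q ^ Suc N) ^ n)" for n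
  have split: "(\<Sum>m\<le>Suc N. g m n * (q ^ m) ^ n) / (q ^ Suc N) ^ n = g (Suc N) n + rest n" for n
  proof -
    have "(\<Sum>m\<le>Suc N. g m n * (q ^ m) ^ n) / (q ^ Suc N) ^ n = (\<Sum>m\<le>Suc N. g m n * (q ^ m / q ^ Suc N) ^ n)"
      unfolding sum_divide_distrib by (intro sum.cong refl) (simp add: power_divide)
    also have "\<dots> = g (Suc N) n + rest n"
      using q0 by (simp add: rest_def)
    finally show ?thesis .
  qed
  have "(\<lambda>n. (\<Sum>m\<le>Suc N. g m n * (q ^ m) ^ n) / (q ^ Suc N) ^ n) \<longlonglongrightarrow> 0"
  proof (rule Lim_transform_bound[OF _ Suc.prems])
    have "1 \<le> norm (q ^ Suc N)"
      using q by (metis less_imp_le norm_power one_le_power)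
    then have "1 \<le> norm ((q ^ Suc N) ^ n)" for n
      by (metis norm_power one_le_power)
    then show "\<forall>\<^sub>F n in sequentially. norm ((\<Sum>m\<le>Suc N. g m n * (q ^ m) ^ n) / (q ^ Suc N) ^ n)
                 \<le> norm (\<Sum>m\<le>Suc N. g m n * (q ^ m) ^ n)"
      by (intro always_eventually allI) (simp add: norm_divide divide_le_eq mult_le_cancel_left1 order_trans)
  qed
  moreover have "rest \<longlonglongrightarrow> 0"
    unfolding rest_def
  proof (intro tendsto_null_sum lim_null_mult_left_bounded[OF always_eventually] allI LIMSEQ_power_zero)
    fix m n assume "m \<in> {..N}"
    show "norm (g m n) \<le> (\<Sum>k<t. norm (g m k))" using periodic_norm_le_sum[of t "g m", OF t per] .
    have "norm q ^ m < norm q ^ Suc N"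
      using q \<open>m \<in> {..N}\<close> by (intro power_strict_increasing) auto
    then show "norm (q ^ m / q ^ Suc N) < 1"
      using order.strict_trans[OF zero_less_one q]
      by (simp add: norm_divide norm_power divide_less_eq_1 zero_less_power del: power_Suc)
  qed
  ultimately have "(\<lambda>n. (g (Suc N) n + rest n) - rest n) \<longlonglongrightarrow> 0 - 0"
    unfolding split by (intro tendsto_diff)
  then have "\<forall>n. g (Suc N) n = 0"
    using periodic_tendsto_zero_imp_zero[of t "g (Suc N)", OF t per] by simp
  moreover from this Suc.prems have "\<forall>m\<le>N. \<forall>n. g m n = 0"
    by (intro Suc.IH) simp
  ultimately show ?case using le_Suc_eq by auto
qed

lemma superexp_decay:
  fixes q r :: complex
  assumes q: "norm q > 1" and e: "e \<ge> 1"
  shows "(\<lambda>n. r ^ n / q ^ (e * triangular n)) \<longlonglongrightarrow> 0"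
proof (rule Lim_null_comparison)
  have "summable (\<lambda>n. (1 / norm q ^ triangular n) * norm r ^ n)"
  proof (rule summable_superexp_ratio[OF q])
    fix n
    have "1 / norm q ^ triangular (Suc n) = (1 / norm q ^ triangular n) / norm q ^ Suc n"
      by (simp add: triangular_Suc power_add)
    also have "\<dots> \<le> (1 / norm q ^ triangular n) / norm q ^ n"
      using q power_increasing[of n "Suc n" "norm q"]
      by (intro divide_left_mono) (auto intro!: mult_pos_pos zero_less_power)
    finally show "1 / norm q ^ triangular (Suc n) \<le> (1 / norm q ^ triangular n) / norm q ^ n" .
  qed (use q in auto)
  then show "(\<lambda>n. norm r ^ n / norm q ^ triangular n) \<longlonglongrightarrow> 0"
    using summable_LIMSEQ_zero by fastforce
  show "\<forall>\<^sub>F n in sequentially. norm (r ^ n / q ^ (e * triangular n)) \<le> norm r ^ n / norm q ^ triangular n"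
  proof (intro always_eventually allI)
    fix n
    have "norm q ^ triangular n \<le> norm q ^ (e * triangular n)"
      using q e by (intro power_increasing) auto
    then show "norm (r ^ n / q ^ (e * triangular n)) \<le> norm r ^ n / norm q ^ triangular n"
      using q order.strict_trans[OF zero_less_one q]
      by (auto simp: norm_divide norm_power intro!: divide_left_mono mult_pos_pos zero_less_power)
  qed
qed

text \<open>The top term outgrows all others by at least a factor \<open>|q|^(triangular n)\<close>, while the
  periodic coefficients are bounded; so the top coefficient sum tends to zero, hence vanishes.\<close>

lemma periodic_exp_sums_growth_separation:
  fixes q z :: complex and g :: "nat \<Rightarrow> nat \<Rightarrow> nat \<Rightarrow> complex"
  assumes q: "norm q > 1" and z: "z \<noteq> 0" and t: "t > 0"
    and per: "\<And>d m n. g d m (n + t) = g d m n"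
  shows "(\<And>n. (\<Sum>d<D. (\<Sum>m\<le>N. g d m n * (q ^ m) ^ n) * ((- z) ^ d) ^ n * q ^ (d * triangular n)) = 0)
         \<Longrightarrow> \<forall>d<D. \<forall>m\<le>N. \<forall>n. g d m n = 0"
proof (induction D)
  case (Suc D)
  have q0: "q \<noteq> 0" using q by auto
  define F where "F d n = (\<Sum>m\<le>N. g d m n * (q ^ m) ^ n)" for d n
  define X where "X d n = ((- z) ^ d) ^ n * q ^ (d * triangular n)" for d n
  have "F D n * X D n + (\<Sum>d<D. F d n * X d n) = 0" for n
    using Suc.prems[of n] by (simp add: F_def X_def mult.assoc add.commute)
  moreover have "X D n \<noteq> 0" for n using z q0 by (simp add: X_def)
  ultimately have top: "F D n = - (\<Sum>d<D. F d n * X d n / X D n)" for n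
    by (simp add: sum_divide_distrib[symmetric] eq_neg_iff_add_eq_0 field_simps)
  have "(\<lambda>n. F d n * X d n / X D n) \<longlonglongrightarrow> 0" if "d < D" for d
  proof -
    have "F d n * X d n / X D n =
          (\<Sum>m\<le>N. g d m n * ((q ^ m * ((- z) ^ d / (- z) ^ D)) ^ n / q ^ ((D - d) * triangular n)))" for n
    proof -
      have "q ^ (D * triangular n) = q ^ ((D - d) * triangular n) * q ^ (d * triangular n)"
        using that by (simp add: power_add[symmetric] add_mult_distrib[symmetric])
      then have "X d n / X D n = ((- z) ^ d / (- z) ^ D) ^ n / q ^ ((D - d) * triangular n)"
        unfolding X_def using z q0 by (simp add: power_divide field_simps)
      then have "F d n * X d n / X D n = F d n * (((- z) ^ d / (- z) ^ D) ^ n / q ^ ((D - d) * triangular n))"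
        by (metis times_divide_eq_right)
      then show ?thesis
        unfolding F_def sum_distrib_right by (simp add: power_mult_distrib power_divide mult.assoc)
    qed
    moreover have "(\<lambda>n. g d m n * ((q ^ m * ((- z) ^ d / (- z) ^ D)) ^ n / q ^ ((D - d) * triangular n))) \<longlonglongrightarrow> 0" for m
      using that periodic_norm_le_sum[of t "g d m", OF t per]
      by (intro lim_null_mult_left_bounded[OF always_eventually] superexp_decay q) auto
    ultimately show ?thesis by (simp add: tendsto_null_sum)
  qed
  then have "(\<lambda>n. \<Sum>d<D. F d n * X d n / X D n) \<longlonglongrightarrow> 0"
    by (intro tendsto_null_sum) auto
  from tendsto_minus[OF this] have "F D \<longlonglongrightarrow> 0"
    by (simp add: top[abs_def])
  then have top_zero: "\<forall>m\<le>N. \<forall>n. g D m n = 0"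
    unfolding F_def using periodic_exp_sum_tendsto_zero_imp_zero[of q t "g D", OF q t per] by blast
  then have "\<forall>d<D. \<forall>m\<le>N. \<forall>n. g d m n = 0"
    using Suc.prems by (intro Suc.IH) simp
  with top_zero show ?case using less_Suc_eq by auto
qed simp

lemma poly_power_eq_sum:
  fixes p :: "'a::comm_semiring_1 poly"
  assumes "degree p \<le> N"
  shows "poly p (x ^ n) = (\<Sum>m\<le>N. coeff p m * (x ^ m) ^ n)"
proof -
  have "poly p (x ^ n) = poly (\<Sum>m\<le>N. monom (coeff p m) m) (x ^ n)"
    using poly_as_sum_of_monoms'[OF assms] by simp
  then show ?thesis
    by (simp add: poly_sum poly_monom power_mult[symmetric] mult.commute)
qed

lemma poly_exp_sums_growth_separation:
  fixes q z :: complex and p :: "nat \<Rightarrow> nat \<Rightarrow> complex poly" and \<xi> :: "nat \<Rightarrow> nat \<Rightarrow> complex"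
  assumes q: "norm q > 1" and z: "z \<noteq> 0" and t: "t > 0" and \<xi>: "\<And>i d. \<xi> i d ^ t = 1"
    and rel: "\<And>n. (\<Sum>d<D. (\<Sum>i<s. poly (p i d) (q ^ n) * \<xi> i d ^ n) * ((- z) ^ d) ^ n * q ^ (d * triangular n)) = 0"
    and d: "d < D"
  shows "(\<Sum>i<s. coeff (p i d) m * \<xi> i d ^ n) = 0"
proof -
  define N where "N = (\<Sum>d<D. \<Sum>i<s. degree (p i d))"
  have deg: "degree (p i d) \<le> N" if "i < s" "d < D" for i d
  proof -
    have "degree (p i d) \<le> (\<Sum>i<s. degree (p i d))" using that by (intro member_le_sum) auto
    also have "\<dots> \<le> N" unfolding N_def using that by (intro member_le_sum) auto
    finally show ?thesis .
  qed
  define g where "g d m n = (\<Sum>i<s. coeff (p i d) m * \<xi> i d ^ n)" for d m n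
  have "(\<Sum>i<s. poly (p i d) (q ^ n) * \<xi> i d ^ n) = (\<Sum>m\<le>N. g d m n * (q ^ m) ^ n)" if "d < D" for d n
  proof -
    have "(\<Sum>i<s. poly (p i d) (q ^ n) * \<xi> i d ^ n) = (\<Sum>i<s. \<Sum>m\<le>N. coeff (p i d) m * (q ^ m) ^ n * \<xi> i d ^ n)"
      using that by (intro sum.cong refl) (simp add: poly_power_eq_sum[OF deg] sum_distrib_right)
    also have "\<dots> = (\<Sum>m\<le>N. g d m n * (q ^ m) ^ n)"
      unfolding g_def sum_distrib_right by (subst sum.swap) (simp add: mult_ac)
    finally show ?thesis .
  qed
  then have "\<forall>d<D. \<forall>m\<le>N. \<forall>n. g d m n = 0"
    using rel by (intro periodic_exp_sums_growth_separation[OF q z t]) (simp_all add: g_def power_add \<xi>)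
  moreover have "coeff (p i d) m = 0" if "i < s" "N < m" for i
    using deg[OF that(1) d] that(2) by (simp add: coeff_eq_0)
  ultimately show ?thesis
    using d by (cases "m \<le> N") (auto simp: g_def)
qed

section \<open>Roots of unity of prime order\<close>

definition primitive_root_of_unity :: "nat \<Rightarrow> complex \<Rightarrow> bool" where
  "primitive_root_of_unity t \<omega> \<longleftrightarrow> \<omega> ^ t = 1 \<and> (\<forall>j. 0 < j \<and> j < t \<longrightarrow> \<omega> ^ j \<noteq> 1)"

lemma primitive_root_of_unity_nonzero:
  "t > 0 \<Longrightarrow> primitive_root_of_unity t \<omega> \<Longrightarrow> \<omega> \<noteq> 0"
  by (auto simp: primitive_root_of_unity_def power_0_left)

lemma primitive_root_of_unity_pow_eq_1_iff:
  assumes "t > 0" and "primitive_root_of_unity t \<omega>"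
  shows "\<omega> ^ a = 1 \<longleftrightarrow> t dvd a"
proof -
  have "\<omega> ^ a = (\<omega> ^ t) ^ (a div t) * \<omega> ^ (a mod t)"
    by (simp add: power_mult[symmetric] power_add[symmetric])
  then have "\<omega> ^ a = \<omega> ^ (a mod t)"
    using assms(2) by (simp add: primitive_root_of_unity_def)
  then show ?thesis
    using assms mod_less_divisor[OF assms(1), of a]
    by (cases "a mod t = 0") (auto simp: primitive_root_of_unity_def dvd_eq_mod_eq_0)
qed

lemma primitive_root_of_unity_power:
  assumes t: "prime t" and \<omega>: "primitive_root_of_unity t \<omega>" and d: "\<not> t dvd d"
  shows "primitive_root_of_unity t (\<omega> ^ d)"
  unfolding primitive_root_of_unity_def
proof (intro conjI allI impI)
  have t0: "t > 0" using t prime_gt_0_nat by blast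
  show "(\<omega> ^ d) ^ t = 1"
    using \<omega> unfolding primitive_root_of_unity_def by (metis mult.commute power_mult power_one)
  fix j assume j: "0 < j \<and> j < t"
  have "\<not> t dvd d * j"
    using d j t by (auto simp: prime_dvd_mult_iff dest: dvd_imp_le)
  then show "(\<omega> ^ d) ^ j \<noteq> 1"
    using primitive_root_of_unity_pow_eq_1_iff[OF t0 \<omega>] by (simp add: power_mult[symmetric])
qed

lemma primitive_root_of_unity_power_sum:
  assumes t: "t > 0" and \<omega>: "primitive_root_of_unity t \<omega>"
  shows "(\<Sum>r<t. (\<omega> ^ k) ^ r) = (if t dvd k then of_nat t else 0)"
proof (cases "t dvd k")
  case True
  then have "\<omega> ^ k = 1" using primitive_root_of_unity_pow_eq_1_iff[OF t \<omega>] by simp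
  then show ?thesis using True by simp
next
  case False
  then have "\<omega> ^ k \<noteq> 1" using primitive_root_of_unity_pow_eq_1_iff[OF t \<omega>] by simp
  moreover have "(\<omega> ^ k) ^ t = 1"
    using \<omega> unfolding primitive_root_of_unity_def by (metis mult.commute power_mult power_one)
  ultimately show ?thesis using False by (simp add: sum_gp_strict)
qed

lemma primitive_root_of_unity_powers_independent:
  assumes t: "t > 0" and \<omega>: "primitive_root_of_unity t \<omega>"
    and c: "\<And>n. (\<Sum>i<t. c i * (\<omega> ^ i) ^ n) = 0" and j: "j < t"
  shows "c j = 0"
proof -
  have dvd_iff: "t dvd i + (t - j) \<longleftrightarrow> i = j" if "i < t" for i
  proof
    assume "t dvd i + (t - j)"
    then obtain k where k: "i + (t - j) = t * k" ..
    then have "0 < t * k" "t * k < t * 2" using that j by arith+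
    then have "k = 1" by simp
    with k that j show "i = j" by simp
  qed (use j in simp)
  have "0 = (\<Sum>r<t. (\<omega> ^ (t - j)) ^ r * (\<Sum>i<t. c i * (\<omega> ^ i) ^ r))"
    using c by simp
  also have "\<dots> = (\<Sum>i<t. c i * (\<Sum>r<t. (\<omega> ^ (i + (t - j))) ^ r))"
    unfolding sum_distrib_left
    by (subst sum.swap) (simp add: power_add power_mult_distrib mult_ac)
  also have "\<dots> = (\<Sum>i<t. if i = j then c i * of_nat t else 0)"
    using dvd_iff by (intro sum.cong refl) (simp add: primitive_root_of_unity_power_sum[OF t \<omega>])
  also have "\<dots> = c j * of_nat t"
    using j by simp
  finally show ?thesis using t by simp
qed

section \<open>The relation at a point whose q-orbit avoids all exceptional points\<close>

lemma prod_poly_mult_eq_poly_remove: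
  fixes A B :: "'k \<Rightarrow> 'a::comm_ring_1 poly"
  assumes "finite S" and "k \<in> S" and "x * poly (B k) y = poly (A k) y"
  shows "(\<Prod>j\<in>S. poly (B j) y) * x = poly (A k * (\<Prod>j\<in>S - {k}. B j)) y"
proof -
  have "(\<Prod>j\<in>S. poly (B j) y) * x = (x * poly (B k) y) * (\<Prod>j\<in>S - {k}. poly (B j) y)"
    using prod.remove[OF assms(1,2), of "\<lambda>j. poly (B j) y"] by (simp add: mult_ac)
  then show ?thesis
    using assms(3) by (simp add: poly_prod)
qed

lemma theta_orbit_relation_cleared:
  fixes q z \<zeta> :: complex and c :: "nat \<Rightarrow> nat \<Rightarrow> complex \<Rightarrow> complex"
    and A B :: "nat \<times> nat \<Rightarrow> complex poly"
  assumes q: "q \<noteq> 0" and z: "z \<noteq> 0" and \<zeta>: "\<zeta> \<noteq> 0"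
    and rel: "(\<Sum>d<t. \<Sum>i<t. c i d (q ^ n * z) * jacobi_theta q (\<zeta> ^ i * (q ^ n * z)) ^ d) = 0"
    and c0: "\<And>i w. 0 < i \<Longrightarrow> c i 0 w = 0"
    and fraction: "\<And>i d. i < t \<Longrightarrow> d < t \<Longrightarrow> c i d (q ^ n * z) * poly (B (i, d)) (q ^ n) = poly (A (i, d)) (q ^ n)"
  defines "p \<equiv> \<lambda>i d. if d = 0 \<and> i \<noteq> 0 then 0
      else smult (jacobi_theta q (\<zeta> ^ i * z) ^ d) (A (i, d) * (\<Prod>k\<in>{..<t} \<times> {..<t} - {(i, d)}. B k))"
  shows "(\<Sum>d<t. (\<Sum>i<t. poly (p i d) (q ^ n) * (\<zeta> ^ (i * d)) ^ n) * ((- z) ^ d) ^ n * q ^ (d * triangular n)) = 0"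
proof -
  define S where "S = {..<t} \<times> {..<t}"
  have orbit_term: "(\<Prod>k\<in>S. poly (B k) (q ^ n)) * (c i d (q ^ n * z) * jacobi_theta q (\<zeta> ^ i * (q ^ n * z)) ^ d)
      = poly (p i d) (q ^ n) * (\<zeta> ^ (i * d)) ^ n * ((- z) ^ d) ^ n * q ^ (d * triangular n)"
    if "i < t" "d < t" for i d
  proof (cases "d = 0 \<and> i \<noteq> 0")
    case True
    then show ?thesis by (simp add: p_def c0)
  next
    case False
    have "(\<Prod>k\<in>S. poly (B k) (q ^ n)) * c i d (q ^ n * z) = poly (A (i, d) * (\<Prod>k\<in>S - {(i, d)}. B k)) (q ^ n)"
      using that fraction[OF that] by (intro prod_poly_mult_eq_poly_remove) (auto simp: S_def)
    moreover have "jacobi_theta q (\<zeta> ^ i * (q ^ n * z)) ^ d =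
        (\<zeta> ^ (i * d)) ^ n * ((- z) ^ d) ^ n * q ^ (d * triangular n) * jacobi_theta q (\<zeta> ^ i * z) ^ d"
      using jacobi_theta_power_mult_q_power[of q z "\<zeta> ^ i" n d] q z \<zeta> by (simp add: power_mult)
    ultimately show ?thesis
      using False by (simp add: p_def S_def mult.assoc[symmetric]) (auto simp: mult_ac)
  qed
  have "0 = (\<Prod>k\<in>S. poly (B k) (q ^ n)) *
            (\<Sum>d<t. \<Sum>i<t. c i d (q ^ n * z) * jacobi_theta q (\<zeta> ^ i * (q ^ n * z)) ^ d)"
    using rel by simp
  also have "\<dots> = (\<Sum>d<t. \<Sum>i<t. poly (p i d) (q ^ n) * (\<zeta> ^ (i * d)) ^ n * ((- z) ^ d) ^ n * q ^ (d * triangular n))"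
    unfolding sum_distrib_left by (intro sum.cong refl) (simp add: orbit_term)
  finally show ?thesis by (simp add: sum_distrib_right)
qed

lemma character_sums_zero_imp_poly_zero:
  fixes p :: "nat \<Rightarrow> complex poly"
  assumes t: "prime t" and \<zeta>: "primitive_root_of_unity t \<zeta>" and d: "0 < d" "d < t"
    and sums: "\<And>m n. (\<Sum>i<t. coeff (p i) m * (\<zeta> ^ (i * d)) ^ n) = 0" and i: "i < t"
  shows "p i = 0"
proof (rule poly_eqI)
  fix m
  have t0: "t > 0" using t prime_gt_0_nat by blast
  have "primitive_root_of_unity t (\<zeta> ^ d)"
    using primitive_root_of_unity_power[OF t \<zeta>] d by (simp add: nat_dvd_not_less)
  moreover have "(\<Sum>i<t. coeff (p i) m * ((\<zeta> ^ d) ^ i) ^ n) = 0" for n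
    using sums[of m n] by (simp add: power_mult[symmetric] mult.commute)
  ultimately show "coeff (p i) m = coeff 0 m"
    using primitive_root_of_unity_powers_independent[OF t0, of "\<zeta> ^ d" "\<lambda>i. coeff (p i) m"] i by simp
qed

lemma theta_orbit_relation_trivial:
  fixes q z \<zeta> :: complex and c :: "nat \<Rightarrow> nat \<Rightarrow> complex \<Rightarrow> complex"
  assumes q: "norm q > 1" and z: "z \<noteq> 0" and t: "prime t" and \<zeta>: "primitive_root_of_unity t \<zeta>"
    and rel: "\<And>n. (\<Sum>d<t. \<Sum>i<t. c i d (q ^ n * z) * jacobi_theta q (\<zeta> ^ i * (q ^ n * z)) ^ d) = 0"
    and c0: "\<And>i w. 0 < i \<Longrightarrow> c i 0 w = 0"
    and fraction: "\<And>i d. i < t \<Longrightarrow> d < t \<Longrightarrow>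
       \<exists>A B. poly B 1 \<noteq> 0 \<and> (\<forall>n. c i d (q ^ n * z) * poly B (q ^ n) = poly A (q ^ n))"
    and theta: "\<And>i. i < t \<Longrightarrow> jacobi_theta q (\<zeta> ^ i * z) \<noteq> 0"
    and i: "i < t" and d: "d < t" and nontrivial: "d \<noteq> 0 \<or> i = 0"
  shows "c i d z = 0"
proof -
  have t0: "t > 0" using t prime_gt_0_nat by blast
  have "\<forall>k. \<exists>AB. fst k < t \<and> snd k < t \<longrightarrow> poly (snd AB) 1 \<noteq> 0 \<and>
      (\<forall>n. c (fst k) (snd k) (q ^ n * z) * poly (snd AB) (q ^ n) = poly (fst AB) (q ^ n))"
    using fraction by (simp add: split_paired_Ex)
  then obtain AB where AB: "\<And>k. fst k < t \<and> snd k < t \<longrightarrow> poly (snd (AB k)) 1 \<noteq> 0 \<and>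
      (\<forall>n. c (fst k) (snd k) (q ^ n * z) * poly (snd (AB k)) (q ^ n) = poly (fst (AB k)) (q ^ n))"
    by (metis choice)
  define A where "A k = fst (AB k)" for k
  define B where "B k = snd (AB k)" for k
  have B1: "poly (B (i, d)) 1 \<noteq> 0" and AB_orbit: "c i d (q ^ n * z) * poly (B (i, d)) (q ^ n) = poly (A (i, d)) (q ^ n)"
    if "i < t" "d < t" for i d n
    using AB[of "(i, d)"] that by (simp_all add: A_def B_def)
  define p where "p \<equiv> \<lambda>i d. if d = 0 \<and> i \<noteq> 0 then 0
      else smult (jacobi_theta q (\<zeta> ^ i * z) ^ d) (A (i, d) * (\<Prod>k\<in>{..<t} \<times> {..<t} - {(i, d)}. B k))"
  have "(\<Sum>d<t. (\<Sum>i<t. poly (p i d) (q ^ n) * (\<zeta> ^ (i * d)) ^ n) * ((- z) ^ d) ^ n * q ^ (d * triangular n)) = 0" for n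
    unfolding p_def using q primitive_root_of_unity_nonzero[OF t0 \<zeta>]
    by (intro theta_orbit_relation_cleared[where c = c and A = A and B = B, OF _ z _ rel c0 AB_orbit]) auto
  then have sums: "(\<Sum>i<t. coeff (p i d') m * (\<zeta> ^ (i * d')) ^ n) = 0" if "d' < t" for d' m n
    using \<zeta> that by (intro poly_exp_sums_growth_separation[OF q z t0]) 
      (auto simp: primitive_root_of_unity_def, metis mult.commute power_mult power_one)
  have "p i d = 0"
  proof (cases "d = 0")
    case True
    have "(\<Sum>i<t. coeff (p i 0) m) = (\<Sum>i\<in>{0}. coeff (p i 0) m)" for m
      by (rule sum.mono_neutral_right) (use t0 in \<open>auto simp: p_def\<close>)
    then show ?thesis
      using sums[OF d, of _ 0] True nontrivial by (auto intro: poly_eqI)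
  next
    case False
    then show ?thesis
      using character_sums_zero_imp_poly_zero[OF t \<zeta> _ d, of "\<lambda>i. p i d"] sums[OF d] i by simp
  qed
  moreover have "(\<Prod>k\<in>{..<t} \<times> {..<t} - {(i, d)}. B k) \<noteq> 0"
  proof -
    have "B k \<noteq> 0" if "k \<in> {..<t} \<times> {..<t}" for k
      using B1[of "fst k" "snd k"] that by auto
    then show ?thesis by (subst prod_zero_iff) auto
  qed
  ultimately have "A (i, d) = 0"
    using theta[OF i] nontrivial by (auto simp: p_def)
  then show ?thesis
    using AB_orbit[OF i d, of 0] B1[OF i d] by simp
qed

section \<open>Conditions holding off a countable subset of the punctured plane\<close>

text \<open>Following a q-orbit needs a condition at all the points \<open>q^n z\<close> at once. The union of the
  dilated exceptional sets \<open>q^-n E\<close> need not be discrete, but it stays countable, and a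
  meromorphic function vanishing off a countable set vanishes outside a discrete set.\<close>

definition cocountable :: "(complex \<Rightarrow> bool) \<Rightarrow> bool" where
  "cocountable P \<longleftrightarrow> countable {z. z \<noteq> 0 \<and> \<not> P z}"

lemma cocountable_if_ae:
  assumes "\<forall>\<^sub>\<approx>z\<in>- {0}. P z"
  shows "cocountable P"
proof -
  have "{z. \<not> P z} sparse_in (- {0})"
    using assms by (simp add: eventually_cosparse)
  then have "countable (- {0} \<inter> {z. \<not> P z})"
    by (intro sparse_imp_countable) auto
  then show ?thesis
    unfolding cocountable_def by (rule countable_subset[rotated]) auto
qed

lemma cocountable_mono: "cocountable P \<Longrightarrow> (\<And>z. z \<noteq> 0 \<Longrightarrow> P z \<Longrightarrow> Q z) \<Longrightarrow> cocountable Q"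
  unfolding cocountable_def by (erule countable_subset[rotated]) auto

lemma cocountable_conj:
  assumes "cocountable P" and "cocountable Q"
  shows "cocountable (\<lambda>z. P z \<and> Q z)"
proof -
  have "countable ({z. z \<noteq> 0 \<and> \<not> P z} \<union> {z. z \<noteq> 0 \<and> \<not> Q z})"
    using assms unfolding cocountable_def by simp
  then show ?thesis
    unfolding cocountable_def by (rule countable_subset[rotated]) auto
qed

lemma cocountable_all:
  fixes P :: "'a::countable \<Rightarrow> complex \<Rightarrow> bool"
  assumes "\<And>x. cocountable (P x)"
  shows "cocountable (\<lambda>z. \<forall>x. P x z)"
proof -
  have "countable (\<Union>x. {z. z \<noteq> 0 \<and> \<not> P x z})"
    using assms unfolding cocountable_def by (intro countable_UN) auto
  then show ?thesis
    unfolding cocountable_def by (rule countable_subset[rotated]) auto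
qed

lemma cocountable_imp: "(c \<Longrightarrow> cocountable P) \<Longrightarrow> cocountable (\<lambda>z. c \<longrightarrow> P z)"
  unfolding cocountable_def by (cases c) auto

lemma cocountable_dilate:
  assumes c: "c \<noteq> 0" and P: "cocountable P"
  shows "cocountable (\<lambda>z. P (c * z))"
proof -
  have "{z. z \<noteq> 0 \<and> \<not> P (c * z)} \<subseteq> (\<lambda>y. y / c) ` {z. z \<noteq> 0 \<and> \<not> P z}"
    using c by (auto intro!: image_eqI[of _ _ "c * _"])
  moreover have "countable ((\<lambda>y. y / c) ` {z. z \<noteq> 0 \<and> \<not> P z})"
    using P unfolding cocountable_def by simp
  ultimately show ?thesis
    unfolding cocountable_def by (rule countable_subset)
qed

lemma meromorphic_cocountable_zero_imp_ae_zero: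
  assumes f: "f meromorphic_on (- {0})" and zero: "cocountable (\<lambda>z. f z = 0)"
  shows "\<forall>\<^sub>\<approx>z\<in>- {0}. f z = 0"
proof (rule ccontr)
  assume "\<not> (\<forall>\<^sub>\<approx>z\<in>- {0}. f z = 0)"
  moreover have "open (- {0::complex})" "connected (- {0::complex})"
    by (auto intro: connected_punctured_universe)
  ultimately have "cocountable (\<lambda>z. f z \<noteq> 0)"
    using meromorphic_imp_constant_or_avoid[OF f] cocountable_if_ae by blast
  with zero have "countable ({z. z \<noteq> 0 \<and> f z \<noteq> 0} \<union> {z. z \<noteq> 0 \<and> f z = 0})"
    unfolding cocountable_def by simp
  moreover have "{z. z \<noteq> 0 \<and> f z \<noteq> 0} \<union> {z. z \<noteq> 0 \<and> f z = 0} = - {0}" by auto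
  ultimately have "countable (insert 0 (- {0::complex}))" by simp
  moreover have "insert 0 (- {0::complex}) = UNIV" by auto
  ultimately show False using uncountable_UNIV_complex by simp
qed

section \<open>Coefficients in \<open>k(z)\<close>\<close>

lemma in_kz_zero: "in_kz q (\<lambda>_. 0)"
proof -
  have "(\<lambda>_. 0) \<in> q_invariant_mero q" "(\<lambda>_. 1) \<in> q_invariant_mero q"
    unfolding q_invariant_mero_def by (auto intro: always_eventually)
  moreover have "\<not> (\<forall>\<^sub>\<approx>z\<in>- {0::complex}. False)"
    by (subst eventually_False) auto
  ultimately show ?thesis
    unfolding in_kz_def
    by (intro exI[of _ "\<lambda>_ _. 0"] exI[of _ "\<lambda>_ _. 1"] exI[of _ 0]) (auto intro: always_eventually)
qed

text \<open>Off a countable set, the q-invariant coefficients of \<open>f\<close> are constant along the q-orbit.\<close>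

lemma in_kz_orbit_fraction:
  assumes f: "in_kz q f" and q: "q \<noteq> 0"
  shows "cocountable (\<lambda>z. \<exists>A B. poly B 1 \<noteq> 0 \<and> (\<forall>n. f (q ^ n * z) * poly B (q ^ n) = poly A (q ^ n)))"
proof -
  obtain a b m where a: "\<forall>i. a i \<in> q_invariant_mero q" and b: "\<forall>i. b i \<in> q_invariant_mero q"
    and den: "\<not> (\<forall>\<^sub>\<approx>z\<in>- {0}. (\<Sum>i\<le>m. b i z * z ^ i) = 0)"
    and frac: "\<forall>\<^sub>\<approx>z\<in>- {0}. f z = (\<Sum>i\<le>m. a i z * z ^ i) / (\<Sum>i\<le>m. b i z * z ^ i)"
    using f unfolding in_kz_def by blast
  define P where "P z = (\<Sum>i\<le>m. a i z * z ^ i)" for z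
  define Q where "Q z = (\<Sum>i\<le>m. b i z * z ^ i)" for z
  have "Q meromorphic_on (- {0})"
    using b unfolding Q_def[abs_def] q_invariant_mero_def by (intro meromorphic_intros) auto
  moreover have "open (- {0::complex})" "connected (- {0::complex})"
    by (auto intro: connected_punctured_universe)
  ultimately have Q_ae: "\<forall>\<^sub>\<approx>z\<in>- {0}. Q z \<noteq> 0"
    using meromorphic_imp_constant_or_avoid den unfolding Q_def by blast
  have inv: "\<forall>\<^sub>\<approx>z\<in>- {0}. g (q * z) = g z" if "g \<in> q_invariant_mero q" for g
    using that unfolding q_invariant_mero_def by auto
  have "cocountable (\<lambda>z. \<forall>n i. a i (q * (q ^ n * z)) = a i (q ^ n * z) \<and> b i (q * (q ^ n * z)) = b i (q ^ n * z))"
    by (intro cocountable_all cocountable_conj cocountable_dilate[of "q ^ _"] cocountable_if_ae inv a[rule_format] b[rule_format])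
      (use q in simp)+
  moreover have "cocountable (\<lambda>z. \<forall>n. f (q ^ n * z) = P (q ^ n * z) / Q (q ^ n * z) \<and> Q (q ^ n * z) \<noteq> 0)"
    using frac Q_ae unfolding P_def Q_def
    by (intro cocountable_all cocountable_conj cocountable_dilate[of "q ^ _"] cocountable_if_ae)
      (use q in simp)+
  ultimately show ?thesis
  proof (rule cocountable_mono[OF cocountable_conj])
    fix z assume z: "z \<noteq> 0"
      and orbit: "(\<forall>n i. a i (q * (q ^ n * z)) = a i (q ^ n * z) \<and> b i (q * (q ^ n * z)) = b i (q ^ n * z)) \<and>
                  (\<forall>n. f (q ^ n * z) = P (q ^ n * z) / Q (q ^ n * z) \<and> Q (q ^ n * z) \<noteq> 0)"
    have const: "a i (q ^ n * z) = a i z \<and> b i (q ^ n * z) = b i z" for i n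
      by (induction n) (use orbit in \<open>auto simp: mult.assoc\<close>)
    define A where "A = (\<Sum>i\<le>m. monom (a i z * z ^ i) i)"
    define B where "B = (\<Sum>i\<le>m. monom (b i z * z ^ i) i)"
    have A: "poly A (q ^ n) = P (q ^ n * z)" for n
      unfolding A_def P_def poly_sum poly_monom const[THEN conjunct1]
      by (intro sum.cong refl) (simp add: power_mult_distrib)
    have B: "poly B (q ^ n) = Q (q ^ n * z)" for n
      unfolding B_def Q_def poly_sum poly_monom const[THEN conjunct2]
      by (intro sum.cong refl) (simp add: power_mult_distrib)
    show "\<exists>A B. poly B 1 \<noteq> 0 \<and> (\<forall>n. f (q ^ n * z) * poly B (q ^ n) = poly A (q ^ n))"
    proof (intro exI conjI allI)
      show "poly B 1 \<noteq> 0" using B[of 0] orbit[THEN conjunct2, rule_format, of 0] by simp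
      show "f (q ^ n * z) * poly B (q ^ n) = poly A (q ^ n)" for n
        using A[of n] B[of n] orbit[THEN conjunct2, rule_format, of n] by simp
    qed
  qed
qed

lemma in_kz_cocountable_zero_imp_ae_zero:
  assumes f: "in_kz q f" and zero: "cocountable (\<lambda>z. f z = 0)"
  shows "\<forall>\<^sub>\<approx>z\<in>- {0}. f z = 0"
proof -
  obtain a b m where a: "\<forall>i. a i \<in> q_invariant_mero q" and b: "\<forall>i. b i \<in> q_invariant_mero q"
    and frac: "\<forall>\<^sub>\<approx>z\<in>- {0}. f z = (\<Sum>i\<le>m. a i z * z ^ i) / (\<Sum>i\<le>m. b i z * z ^ i)"
    using f unfolding in_kz_def by blast
  define g where "g z = (\<Sum>i\<le>m. a i z * z ^ i) / (\<Sum>i\<le>m. b i z * z ^ i)" for z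
  have fg: "\<forall>\<^sub>\<approx>z\<in>- {0}. f z = g z"
    using frac by (simp add: g_def)
  have "g meromorphic_on (- {0})"
    using a b unfolding g_def[abs_def] q_invariant_mero_def by (intro meromorphic_intros) auto
  moreover have "cocountable (\<lambda>z. g z = 0)"
    using cocountable_conj[OF zero cocountable_if_ae[OF fg]] by (rule cocountable_mono) auto
  ultimately have "\<forall>\<^sub>\<approx>z\<in>- {0}. g z = 0"
    by (rule meromorphic_cocountable_zero_imp_ae_zero)
  with fg show ?thesis
    by eventually_elim simp
qed

lemma theta_relation_coefficients_vanish:
  fixes q \<zeta> :: complex and c :: "nat \<Rightarrow> nat \<Rightarrow> complex \<Rightarrow> complex"
  assumes q: "norm q > 1" and t: "prime t" and \<zeta>: "primitive_root_of_unity t \<zeta>"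
    and kz: "\<And>i d. i < t \<Longrightarrow> d < t \<Longrightarrow> in_kz q (c i d)"
    and c0: "\<And>i w. 0 < i \<Longrightarrow> c i 0 w = 0"
    and rel: "\<forall>\<^sub>\<approx>z\<in>- {0}. (\<Sum>d<t. \<Sum>i<t. c i d z * jacobi_theta q (\<zeta> ^ i * z) ^ d) = 0"
    and i: "i < t" and d: "d < t" and nontrivial: "d \<noteq> 0 \<or> i = 0"
  shows "\<forall>\<^sub>\<approx>z\<in>- {0}. c i d z = 0"
proof -
  have q0: "q \<noteq> 0" using q by auto
  have \<zeta>0: "\<zeta> \<noteq> 0" using primitive_root_of_unity_nonzero t \<zeta> prime_gt_0_nat by blast
  have "cocountable (\<lambda>z. \<forall>n. (\<Sum>d<t. \<Sum>i<t. c i d (q ^ n * z) * jacobi_theta q (\<zeta> ^ i * (q ^ n * z)) ^ d) = 0)"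
    by (intro cocountable_all cocountable_dilate[of "q ^ _"] cocountable_if_ae rel) (use q0 in simp)
  moreover have "cocountable (\<lambda>z. \<forall>i d. i < t \<longrightarrow> d < t \<longrightarrow>
      (\<exists>A B. poly B 1 \<noteq> 0 \<and> (\<forall>n. c i d (q ^ n * z) * poly B (q ^ n) = poly A (q ^ n))))"
    by (intro cocountable_all cocountable_imp in_kz_orbit_fraction kz q0)
  moreover have "cocountable (\<lambda>z. \<forall>i. i < t \<longrightarrow> jacobi_theta q (\<zeta> ^ i * z) \<noteq> 0)"
    by (intro cocountable_all cocountable_imp cocountable_dilate[of "\<zeta> ^ _"] cocountable_if_ae
        jacobi_theta_ae_nonzero q) (use \<zeta>0 in simp)
  ultimately have "cocountable (\<lambda>z. c i d z = 0)"
  proof (rule cocountable_mono[OF cocountable_conj[OF _ cocountable_conj]])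
    fix z :: complex assume "z \<noteq> 0" and "(\<forall>n. (\<Sum>d<t. \<Sum>i<t. c i d (q ^ n * z) * jacobi_theta q (\<zeta> ^ i * (q ^ n * z)) ^ d) = 0) \<and>
      (\<forall>i d. i < t \<longrightarrow> d < t \<longrightarrow> (\<exists>A B. poly B 1 \<noteq> 0 \<and> (\<forall>n. c i d (q ^ n * z) * poly B (q ^ n) = poly A (q ^ n)))) \<and>
      (\<forall>i. i < t \<longrightarrow> jacobi_theta q (\<zeta> ^ i * z) \<noteq> 0)"
    then show "c i d z = 0"
      using theta_orbit_relation_trivial[of q z t \<zeta> c, OF q _ t \<zeta> _ c0 _ _ i d nontrivial] by blast
  qed
  then show ?thesis
    by (rule in_kz_cocountable_zero_imp_ae_zero[OF kz[OF i d]])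
qed

theorem theorem5:
  fixes t :: nat and \<zeta> q :: complex
    and lam0 :: "complex \<Rightarrow> complex"
    and lam :: "nat \<Rightarrow> nat \<Rightarrow> complex \<Rightarrow> complex"
  assumes "prime t"
    and "\<zeta> ^ t = 1" and "\<forall>j. 0 < j \<and> j < t \<longrightarrow> \<zeta> ^ j \<noteq> 1"
    and "norm q > 1"
    and "in_kz q lam0"
    and "\<forall>i<t. \<forall>d\<in>{1..t-1}. in_kz q (lam i d)"
    and "\<forall>\<^sub>\<approx>z\<in>(-{0}).
           lam0 z + (\<Sum>d\<in>{1..t-1}. \<Sum>i<t. lam i d z * (jacobi_theta q (\<zeta> ^ i * z)) ^ d) = 0"
  shows "(\<forall>\<^sub>\<approx>z\<in>(-{0}). lam0 z = 0) \<and>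
         (\<forall>i<t. \<forall>d\<in>{1..t-1}. \<forall>\<^sub>\<approx>z\<in>(-{0}). lam i d z = 0)"
proof -
  have t0: "t > 0" using assms(1) prime_gt_0_nat by blast
  have \<zeta>: "primitive_root_of_unity t \<zeta>"
    using assms(2,3) by (simp add: primitive_root_of_unity_def)
  define c where "c i d z = (if d = 0 then (if i = 0 then lam0 z else 0) else lam i d z)" for i d z
  have kz: "in_kz q (c i d)" if "i < t" "d < t" for i d
    using assms(5,6) that in_kz_zero by (cases "d = 0"; cases "i = 0") (simp_all add: c_def[abs_def])
  have "(\<Sum>d<t. \<Sum>i<t. c i d z * jacobi_theta q (\<zeta> ^ i * z) ^ d) =
        lam0 z + (\<Sum>d\<in>{1..t-1}. \<Sum>i<t. lam i d z * jacobi_theta q (\<zeta> ^ i * z) ^ d)" for z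
  proof -
    have "{..<t} = insert 0 {1..t-1}" using t0 by auto
    then show ?thesis using t0 by (simp add: c_def)
  qed
  then have "\<forall>\<^sub>\<approx>z\<in>- {0}. (\<Sum>d<t. \<Sum>i<t. c i d z * jacobi_theta q (\<zeta> ^ i * z) ^ d) = 0"
    using assms(7) by simp
  note vanish = theta_relation_coefficients_vanish[OF assms(4,1) \<zeta> kz _ this]
  show ?thesis
  proof (intro conjI allI impI ballI)
    show "\<forall>\<^sub>\<approx>z\<in>- {0}. lam0 z = 0"
      using vanish[of 0 0] t0 by (simp add: c_def)
    fix i d assume "i < t" "d \<in> {1..t-1}"
    moreover from this have "d < t" "d \<noteq> 0" using t0 by auto
    ultimately show "\<forall>\<^sub>\<approx>z\<in>- {0}. lam i d z = 0"
      using vanish[of i d] by (simp add: c_def)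
  qed
qed

end
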